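(* Let $R$ be a reflexive relation on $U$. For every $(A,B)\in\mathrm{DM(RS)}$, $(A,B)=\bigvee\{(\{a\}^{\vartriangle\blacktriangledown},\{a\}^{\vartriangle\blacktriangle})\mid a\in A\}\ \vee\ \bigvee\{(\{b\}^{\blacktriangledown},\{b\}^{\blacktriangle})\mid b\in B^{\triangledown}\}$, joins taken in $\mathrm{DM(RS)}$.
   Context: Let $U$ be a set and $R\subseteq U\times U$ a binary relation. For $x\in U$, $R(x)=\{y\in U\mid (x,y)\in R\}$ and $\breve R(x)=\{y\in U\mid (y,x)\in R\}$. For $X\subseteq U$: $X^{\blacktriangledown}=\{x\in U\mid R(x)\subseteq X\}$, $X^{\blacktriangle}=\{x\in U\mid R(x)\cap X\neq\emptyset\}$, $X^{\triangledown}=\{x\in U\mid \breve R(x)\subseteq X\}$, $X^{\vartriangle}=\{x\in U\mid \breve R(x)\cap X\neq\emptyset\}$; composites like $X^{\vartriangle\blacktriangledown}$ mean $(X^{\vartriangle})^{\blacktriangledown}$. $\wp(U)^{\blacktriangledown}=\{X^{\blacktriangledown}\mid X\subseteq U\}$, $\wp(U)^{\blacktriangle}=\{X^{\blacktriangle}\mid X\subseteq U\}$. $\mathcal S=\{x\in U\mid |R(x)|=1\}$. $\mathrm{RS}=\{(X^{\blacktriangledown},X^{\blacktriangle})\mid X\subseteq U\}$ ordered coordinatewise; $\mathrm{DM(RS)}$ is its Dedekind–MacNeille completion, identified with $\{(A,B)\in\wp(U)^{\blacktriangledown}\times\wp(U)^{\blacktriangle}\mid A^{\vartriangle\blacktriangle}\subseteq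 B,\ A\cap\mathcal S=B\cap\mathcal S\}$ ordered coordinatewise, with meets $\bigwedge_i(X_i,Y_i)=(\bigcap_iX_i,(\bigcap_iY_i)^{\triangledown\blacktriangle})$ and joins $\bigvee_i(X_i,Y_i)=((\bigcup_iX_i)^{\vartriangle\blacktriangledown},\bigcup_iY_i)$. *)

theory Defs
  imports Main
begin

text \<open>The universe U is the type 'a (U = UNIV); R :: ('a \<times> 'a) set.\<close>

definition Rimg :: "('a \<times> 'a) set \<Rightarrow> 'a \<Rightarrow> 'a set" where
  "Rimg R x = {y. (x, y) \<in> R}"

definition Rinv :: "('a \<times> 'a) set \<Rightarrow> 'a \<Rightarrow> 'a set" where
  "Rinv R x = {y. (y, x) \<in> R}"

definition lowB :: "('a \<times> 'a) set \<Rightarrow> 'a set \<Rightarrow> 'a set" where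
  "lowB R X = {x. Rimg R x \<subseteq> X}"

definition uppB :: "('a \<times> 'a) set \<Rightarrow> 'a set \<Rightarrow> 'a set" where
  "uppB R X = {x. Rimg R x \<inter> X \<noteq> {}}"

definition lowW :: "('a \<times> 'a) set \<Rightarrow> 'a set \<Rightarrow> 'a set" where
  "lowW R X = {x. Rinv R x \<subseteq> X}"

definition uppW :: "('a \<times> 'a) set \<Rightarrow> 'a set \<Rightarrow> 'a set" where
  "uppW R X = {x. Rinv R x \<inter> X \<noteq> {}}"

definition singR :: "('a \<times> 'a) set \<Rightarrow> 'a set" where
  "singR R = {x. \<exists>y. Rimg R x = {y}}"

text \<open>DM(RS), in its concrete identification\<close>
definition DM :: "('a \<times> 'a) set \<Rightarrow> ('a set \<times> 'a set) set" where
  "DM R = {(A, B). A \<in> range (lowB R) \<and> B \<in> range (uppB R)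
             \<and> uppB R (uppW R A) \<subseteq> B \<and> A \<inter> singR R = B \<inter> singR R}"

definition dmJoin :: "('a \<times> 'a) set \<Rightarrow> ('a set \<times> 'a set) set \<Rightarrow> 'a set \<times> 'a set" where
  "dmJoin R F = (lowB R (uppW R (\<Union> (fst ` F))), \<Union> (snd ` F))"

definition dmJoin2 :: "('a \<times> 'a) set \<Rightarrow> 'a set \<times> 'a set \<Rightarrow> 'a set \<times> 'a set \<Rightarrow> 'a set \<times> 'a set" where
  "dmJoin2 R p q = dmJoin R {p, q}"

end

theory Submission
  imports Defs
begin

text \<open>
  Both \<open>(uppW R, lowB R)\<close> and \<open>(uppB R, lowW R)\<close> are Galois connections, so
  \<open>lowB R \<circ> uppW R\<close> is a closure operator fixing every \<open>A \<in> range (lowB R)\<close> and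
  \<open>uppB R \<circ> lowW R\<close> fixes every \<open>B \<in> range (uppB R)\<close>. The first components of the generators lie between \<open>A\<close> and its closure:
  \<open>lowB R (uppW R {a})\<close> contains \<open>a\<close>, and by reflexivity \<open>lowB R {b}\<close> is empty or
  \<open>{b}\<close> with \<open>b \<in> B \<inter> singR R = A \<inter> singR R\<close>. The second components unite to
  \<open>uppB R (uppW R A) \<union> uppB R (lowW R B) = B\<close>.
\<close>

lemma uppW_subset_iff: "uppW R X \<subseteq> Y \<longleftrightarrow> X \<subseteq> lowB R Y"
  unfolding uppW_def lowB_def Rimg_def Rinv_def by blast

lemma lowB_uppW_extensive: "X \<subseteq> lowB R (uppW R X)"
  using uppW_subset_iff[of R X "uppW R X"] by simp

lemma lowB_uppW_mono: "X \<subseteq> Y \<Longrightarrow> lowB R (uppW R X) \<subseteq> lowB R (uppW R Y)"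
  unfolding lowB_def uppW_def by blast

lemma lowB_uppW_lowB: "lowB R (uppW R (lowB R Z)) = lowB R Z"
  unfolding lowB_def uppW_def Rimg_def Rinv_def by blast

lemma uppB_lowW_uppB: "uppB R (lowW R (uppB R Y)) = uppB R Y"
  unfolding uppB_def lowW_def Rimg_def Rinv_def by blast

lemma uppB_UNION: "(\<Union>i\<in>I. uppB R (X i)) = uppB R (\<Union>i\<in>I. X i)"
  unfolding uppB_def by blast

lemma uppW_UNION: "(\<Union>i\<in>I. uppW R (X i)) = uppW R (\<Union>i\<in>I. X i)"
  unfolding uppW_def by blast

lemma lowB_uppW_Un_closures:
  "lowB R (uppW R (lowB R (uppW R X) \<union> lowB R (uppW R Y))) = lowB R (uppW R (X \<union> Y))"
proof (rule subset_antisym)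
  have "lowB R (uppW R X) \<union> lowB R (uppW R Y) \<subseteq> lowB R (uppW R (X \<union> Y))"
    using lowB_uppW_mono[of X "X \<union> Y" R] lowB_uppW_mono[of Y "X \<union> Y" R] by blast
  then have "lowB R (uppW R (lowB R (uppW R X) \<union> lowB R (uppW R Y)))
      \<subseteq> lowB R (uppW R (lowB R (uppW R (X \<union> Y))))"
    by (rule lowB_uppW_mono)
  then show "lowB R (uppW R (lowB R (uppW R X) \<union> lowB R (uppW R Y))) \<subseteq> lowB R (uppW R (X \<union> Y))"
    by (simp only: lowB_uppW_lowB)
  have "X \<union> Y \<subseteq> lowB R (uppW R X) \<union> lowB R (uppW R Y)"
    using lowB_uppW_extensive[of X R] lowB_uppW_extensive[of Y R] by blast
  then show "lowB R (uppW R (X \<union> Y)) \<subseteq> lowB R (uppW R (lowB R (uppW R X) \<union> lowB R (uppW R Y)))"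
    by (rule lowB_uppW_mono)
qed

lemma lowB_uppW_eq_if_between:
  assumes "A \<subseteq> X" and "X \<subseteq> lowB R (uppW R A)"
  shows "lowB R (uppW R X) = lowB R (uppW R A)"
proof (rule subset_antisym)
  have "lowB R (uppW R X) \<subseteq> lowB R (uppW R (lowB R (uppW R A)))"
    using assms(2) by (rule lowB_uppW_mono)
  then show "lowB R (uppW R X) \<subseteq> lowB R (uppW R A)"
    by (simp only: lowB_uppW_lowB)
  show "lowB R (uppW R A) \<subseteq> lowB R (uppW R X)"
    using assms(1) by (rule lowB_uppW_mono)
qed

lemma dmJoin_setcompr:
  "dmJoin R {(f i, g i) | i. i \<in> I} = (lowB R (uppW R (\<Union>i\<in>I. f i)), \<Union>i\<in>I. g i)"
proof -
  have "{(f i, g i) | i. i \<in> I} = (\<lambda>i. (f i, g i)) ` I" by blast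
  then show ?thesis by (simp add: dmJoin_def image_image)
qed

lemma dmJoin2_Pair:
  "dmJoin2 R (X1, Y1) (X2, Y2) = (lowB R (uppW R (X1 \<union> X2)), Y1 \<union> Y2)"
  by (simp add: dmJoin2_def dmJoin_def)

lemma refl_lowW_subset: "refl R \<Longrightarrow> lowW R B \<subseteq> B"
  unfolding refl_on_def lowW_def Rinv_def by blast

lemma refl_lowB_singleton: "refl R \<Longrightarrow> lowB R {b} \<subseteq> {b} \<inter> singR R"
  unfolding refl_on_def lowB_def singR_def Rimg_def by blast

lemma DM_lowB_singleton_subset:
  assumes "refl R" and "(A, B) \<in> DM R" and "b \<in> lowW R B"
  shows "lowB R {b} \<subseteq> A"
proof -
  have "b \<in> B" using refl_lowW_subset[OF assms(1)] assms(3) by blast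
  moreover have "A \<inter> singR R = B \<inter> singR R" using assms(2) by (simp add: DM_def)
  ultimately show ?thesis using refl_lowB_singleton[OF assms(1)] by blast
qed

theorem mainTheorem14:
  fixes R :: "('a \<times> 'a) set" and A B :: "'a set"
  assumes "refl R"
    and "(A, B) \<in> DM R"
  shows "(A, B) = dmJoin2 R
           (dmJoin R {(lowB R (uppW R {a}), uppB R (uppW R {a})) | a. a \<in> A})
           (dmJoin R {(lowB R {b}, uppB R {b}) | b. b \<in> lowW R B})"
proof -
  from assms(2) obtain Z Y where A: "A = lowB R Z" and B: "B = uppB R Y"
    and upp_A: "uppB R (uppW R A) \<subseteq> B"
    unfolding DM_def by auto
  have A_closed: "lowB R (uppW R A) = A"
    unfolding A by (rule lowB_uppW_lowB)
  let ?U = "(\<Union>a\<in>A. lowB R (uppW R {a})) \<union> (\<Union>b\<in>lowW R B. lowB R {b})"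
  have "A \<subseteq> ?U"
  proof
    fix a assume "a \<in> A"
    then show "a \<in> ?U" using lowB_uppW_extensive[of "{a}" R] by blast
  qed
  moreover have "?U \<subseteq> A"
  proof -
    have "lowB R (uppW R {a}) \<subseteq> A" if "a \<in> A" for a
      using lowB_uppW_mono[of "{a}" A R] that A_closed by simp
    moreover have "lowB R {b} \<subseteq> A" if "b \<in> lowW R B" for b
      using DM_lowB_singleton_subset[OF assms that] .
    ultimately show ?thesis by blast
  qed
  ultimately have first: "lowB R (uppW R ?U) = A"
    using lowB_uppW_eq_if_between[of A ?U R] A_closed by simp
  have "(\<Union>a\<in>A. uppB R (uppW R {a})) = uppB R (uppW R A)"
    unfolding uppB_UNION uppW_UNION by simp
  moreover have "(\<Union>b\<in>lowW R B. uppB R {b}) = B"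
    unfolding uppB_UNION[of R "\<lambda>b. {b}"] B by (simp add: uppB_lowW_uppB)
  ultimately have second: "(\<Union>a\<in>A. uppB R (uppW R {a})) \<union> (\<Union>b\<in>lowW R B. uppB R {b}) = B"
    using upp_A by blast
  show ?thesis
    unfolding dmJoin_setcompr dmJoin2_Pair lowB_uppW_Un_closures first second ..
qed

end
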